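(* Let $d\ge 1$ be an integer, $\gamma^2>0$ and $\sigma^2\ge 0$. For a finite non-empty coalition $\mathcal{K}$ of participants, where participant $k$ has data size $D_k>0$, let $K=|\mathcal{K}|$ and define the generalization error of the model trained by $\mathcal{K}$ as $$\varepsilon_{\mathcal{K}}=\frac{d\gamma^2}{K^2}\sum_{k\in\mathcal{K}}\frac{1}{D_k}+\frac{K-1}{K}\sigma^2 .$$ Let $\mathcal{K}_a$ and $\mathcal{K}_b$ be two disjoint non-empty coalitions with $K_a=|\mathcal{K}_a|$, $K_b=|\mathcal{K}_b|$, and let $H_a=K_a\big/\sum_{k\in\mathcal{K}_a}D_k^{-1}$ and $H_b=K_b\big/\sum_{k\in\mathcal{K}_b}D_k^{-1}$ be the harmonic means of the data sizes in $\mathcal{K}_a$ and $\mathcal{K}_b$, and assume $H_a\le H_b$. Write $\varepsilon_a=\varepsilon_{\mathcal{K}_a}$, $\varepsilon_b=\varepsilon_{\mathcal{K}_b}$, $\varepsilon_{a+b}=\varepsilon_{\mathcal{K}_a\cup\mathcal{K}_b}$. Then $\varepsilon_{a+b}<\max\{\varepsilon_a,\varepsilon_b\}$ if and only if $$\frac{\sigma^2}{\gamma^2}<\frac{H_bK_b+K_a(2H_b-H_a)}{H_aH_b(K_a+K_b)/d}.$$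
   Context: This models federated learning with linear models: $d$ is the feature dimension, $\gamma^2$ the variance of Gaussian noise on training targets (data variance), and $\sigma^2$ the variance capturing divergence across clients' feature distributions (client variance). The displayed formula for $\varepsilon_{\mathcal{K}}$ is taken as the definition of the generalization error of the federated model trained by coalition $\mathcal{K}$. *)

theory Defs
  imports Complex_Main
begin

definition gen_error :: "nat \<Rightarrow> real \<Rightarrow> real \<Rightarrow> ('a \<Rightarrow> real) \<Rightarrow> 'a set \<Rightarrow> real" where
  "gen_error d gamma2 sigma2 D K =
     real d * gamma2 / (real (card K))^2 * (\<Sum>k\<in>K. 1 / D k)
     + (real (card K) - 1) / real (card K) * sigma2"

definition harm_mean :: "('a \<Rightarrow> real) \<Rightarrow> 'a set \<Rightarrow> real" where
  "harm_mean D K = real (card K) / (\<Sum>k\<in>K. 1 / D k)"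

end

theory Submission
  imports Defs
begin

text \<open>Rewrite every error through the harmonic means \<open>H\<close>, using
  \<open>\<Sum>k\<in>K. 1 / D k = |K| / H\<close>. Merging \<open>K\<^sub>b\<close> into \<open>K\<^sub>a\<close> changes the error by
  \<open>K\<^sub>b / (K\<^sub>a (K\<^sub>a + K\<^sub>b))\<close> times \<open>\<sigma>\<^sup>2 - T\<^sub>a\<close>, for an explicit critical client variance
  \<open>T\<^sub>a\<close>; so the merged model beats \<open>K\<^sub>a\<close> exactly when \<open>\<sigma>\<^sup>2 < T\<^sub>a\<close>, and symmetrically
  for \<open>K\<^sub>b\<close>. Since \<open>T\<^sub>a - T\<^sub>b = 2 d \<gamma>\<^sup>2 (H\<^sub>b - H\<^sub>a) / (H\<^sub>a H\<^sub>b) \<ge> 0\<close>, beating the worse of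
  the two coalitions amounts to \<open>\<sigma>\<^sup>2 < T\<^sub>a\<close>.\<close>

text \<open>\<open>merge_threshold (d * \<gamma>\<^sup>2) K\<^sub>a K\<^sub>b H\<^sub>a H\<^sub>b\<close> is \<open>T\<^sub>a\<close>.\<close>

definition merge_threshold :: "real \<Rightarrow> real \<Rightarrow> real \<Rightarrow> real \<Rightarrow> real \<Rightarrow> real" where
  "merge_threshold c a b Ha Hb = c * (Hb * b + a * (2 * Hb - Ha)) / (Ha * Hb * (a + b))"

lemma harm_mean_pos:
  assumes "finite K" "K \<noteq> {}" "\<forall>k\<in>K. D k > 0"
  shows "harm_mean D K > 0"
proof -
  have "(\<Sum>k\<in>K. 1 / D k) > 0"
    using assms by (intro sum_pos) auto
  then show ?thesis
    using assms by (simp add: harm_mean_def card_gt_0_iff)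
qed

lemma sum_inverse_eq_card_div_harm_mean:
  assumes "finite K" "K \<noteq> {}"
  shows "(\<Sum>k\<in>K. 1 / D k) = real (card K) / harm_mean D K"
  using assms by (simp add: harm_mean_def)

lemma gen_error_eq_harm_mean:
  assumes "finite K" "K \<noteq> {}"
  shows "gen_error d gamma2 sigma2 D K
           = real d * gamma2 / (real (card K) * harm_mean D K)
             + (real (card K) - 1) / real (card K) * sigma2"
  using assms by (simp add: gen_error_def harm_mean_def power2_eq_square)

lemma gen_error_Un_eq_harm_mean:
  assumes "finite Ka" "finite Kb" "Ka \<noteq> {}" "Kb \<noteq> {}" "Ka \<inter> Kb = {}"
  defines "a \<equiv> real (card Ka)" and "b \<equiv> real (card Kb)"
  shows "gen_error d gamma2 sigma2 D (Ka \<union> Kb)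
           = real d * gamma2 / (a + b)\<^sup>2 * (a / harm_mean D Ka + b / harm_mean D Kb)
             + (a + b - 1) / (a + b) * sigma2"
proof -
  have "card (Ka \<union> Kb) = card Ka + card Kb"
    using assms card_Un_disjoint by blast
  moreover have "(\<Sum>k\<in>Ka \<union> Kb. 1 / D k) = (\<Sum>k\<in>Ka. 1 / D k) + (\<Sum>k\<in>Kb. 1 / D k)"
    using assms sum.union_disjoint by blast
  ultimately show ?thesis
    using assms by (simp add: gen_error_def sum_inverse_eq_card_div_harm_mean)
qed

lemma merged_error_less_iff:
  fixes c s a b Ha Hb :: real
  assumes "a > 0" "b > 0" "Ha > 0" "Hb > 0"
  shows "c / (a + b)\<^sup>2 * (a / Ha + b / Hb) + (a + b - 1) / (a + b) * s
           < c / (a * Ha) + (a - 1) / a * s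
         \<longleftrightarrow> s < merge_threshold c a b Ha Hb"
proof -
  have gap: "c / (a * Ha) + (a - 1) / a * s
               - (c / (a + b)\<^sup>2 * (a / Ha + b / Hb) + (a + b - 1) / (a + b) * s)
             = b / (a * (a + b)) * (merge_threshold c a b Ha Hb - s)"
    using assms unfolding merge_threshold_def
    by (simp add: divide_simps power2_eq_square) (simp add: algebra_simps)
  have "b / (a * (a + b)) > 0"
    using assms by simp
  then have "0 < b / (a * (a + b)) * (merge_threshold c a b Ha Hb - s)
             \<longleftrightarrow> s < merge_threshold c a b Ha Hb"
    by (metis diff_gt_0_iff_gt mult_pos_pos zero_less_mult_pos)
  with gap show ?thesis
    by linarith
qed

lemma gen_error_Un_less_iff:
  assumes "finite Ka" "finite Kb" "Ka \<noteq> {}" "Kb \<noteq> {}" "Ka \<inter> Kb = {}"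
    and "\<forall>k\<in>Ka \<union> Kb. D k > 0"
  shows "gen_error d gamma2 sigma2 D (Ka \<union> Kb) < gen_error d gamma2 sigma2 D Ka
         \<longleftrightarrow> sigma2 < merge_threshold (real d * gamma2) (real (card Ka)) (real (card Kb))
                         (harm_mean D Ka) (harm_mean D Kb)"
proof -
  have "real (card Ka) > 0" "real (card Kb) > 0"
    using assms by (auto simp: card_gt_0_iff)
  moreover have "harm_mean D Ka > 0" "harm_mean D Kb > 0"
    using assms by (auto intro: harm_mean_pos)
  ultimately show ?thesis
    unfolding gen_error_Un_eq_harm_mean[OF assms(1-5)] gen_error_eq_harm_mean[OF assms(1,3)]
    by (rule merged_error_less_iff)
qed

lemma merge_threshold_diff:
  assumes "a + b \<noteq> 0" "Ha \<noteq> 0" "Hb \<noteq> 0"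
  shows "merge_threshold c a b Ha Hb - merge_threshold c b a Hb Ha = 2 * c * (Hb - Ha) / (Ha * Hb)"
  using assms unfolding merge_threshold_def
  by (simp add: divide_simps) (simp add: algebra_simps)

lemma merge_threshold_swap_le:
  assumes "a > 0" "b > 0" "Ha > 0" "Ha \<le> Hb" "c \<ge> 0"
  shows "merge_threshold c b a Hb Ha \<le> merge_threshold c a b Ha Hb"
proof -
  have "2 * c * (Hb - Ha) / (Ha * Hb) \<ge> 0"
    using assms by simp
  moreover have "merge_threshold c a b Ha Hb - merge_threshold c b a Hb Ha
                   = 2 * c * (Hb - Ha) / (Ha * Hb)"
    using assms by (intro merge_threshold_diff) auto
  ultimately show ?thesis
    by linarith
qed

theorem corollary1:
  fixes d :: nat and gamma2 sigma2 :: real and D :: "'a \<Rightarrow> real"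
    and Ka Kb :: "'a set"
  assumes "d \<ge> 1" and "gamma2 > 0" and "sigma2 \<ge> 0"
    and "finite Ka" and "finite Kb" and "Ka \<noteq> {}" and "Kb \<noteq> {}"
    and "Ka \<inter> Kb = {}"
    and "\<forall>k\<in>Ka \<union> Kb. D k > 0"
    and "harm_mean D Ka \<le> harm_mean D Kb"
  shows "gen_error d gamma2 sigma2 D (Ka \<union> Kb)
           < max (gen_error d gamma2 sigma2 D Ka) (gen_error d gamma2 sigma2 D Kb)
         \<longleftrightarrow>
         sigma2 / gamma2 <
           (harm_mean D Kb * real (card Kb)
              + real (card Ka) * (2 * harm_mean D Kb - harm_mean D Ka))
           / (harm_mean D Ka * harm_mean D Kb * real (card Ka + card Kb) / real d)"
proof -
  let ?E = "gen_error d gamma2 sigma2 D"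
  let ?a = "real (card Ka)" and ?b = "real (card Kb)"
  let ?Ha = "harm_mean D Ka" and ?Hb = "harm_mean D Kb"
  let ?T = "merge_threshold (real d * gamma2)"
  have Ha: "?Ha > 0" and Hb: "?Hb > 0"
    using assms by (auto intro: harm_mean_pos)
  have "?a > 0" "?b > 0"
    using assms by (auto simp: card_gt_0_iff)
  have beats_a: "?E (Ka \<union> Kb) < ?E Ka \<longleftrightarrow> sigma2 < ?T ?a ?b ?Ha ?Hb"
    using assms by (intro gen_error_Un_less_iff) auto
  have beats_b: "?E (Ka \<union> Kb) < ?E Kb \<longleftrightarrow> sigma2 < ?T ?b ?a ?Hb ?Ha"
    using assms gen_error_Un_less_iff[of Kb Ka D d gamma2 sigma2]
    by (simp add: Un_commute Int_commute)
  have "?T ?b ?a ?Hb ?Ha \<le> ?T ?a ?b ?Ha ?Hb"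
    using \<open>?a > 0\<close> \<open>?b > 0\<close> Ha assms by (intro merge_threshold_swap_le) auto
  then have "?E (Ka \<union> Kb) < max (?E Ka) (?E Kb) \<longleftrightarrow> sigma2 < ?T ?a ?b ?Ha ?Hb"
    using beats_a beats_b by auto
  also have "\<dots> \<longleftrightarrow> sigma2 / gamma2 <
      (?Hb * ?b + ?a * (2 * ?Hb - ?Ha)) / (?Ha * ?Hb * real (card Ka + card Kb) / real d)"
    using assms Ha Hb unfolding merge_threshold_def
    by (simp add: field_simps)
  finally show ?thesis .
qed

end
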